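(* Let $n \geq 2$ be an integer. Consider $n$ independent random variables $X_1, \dots, X_n$, each taking values in the non-negative integers and each with $\mathbb{E}[X_i] = 1$ (not necessarily identically distributed), and write $p_i(j) = P(X_i = j)$. Among all such choices of the distributions $p_1, \dots, p_n$, consider one that minimizes $P\left(\sum_{i=1}^n X_i \leq n\right)$. Then for such a minimizing choice, $p_i(j) = 0$ for all $j > n+1$ and all $i = 1, \dots, n$.
   Context: The minimization is over all $n$-tuples of probability mass functions $p_1,\dots,p_n$ on $\{0,1,2,\dots\}$ with $\sum_j j\,p_i(j) = 1$ for each $i$, the $X_i$ being independent with these laws; the minimum is attained. *)

theory Defs
  imports "HOL-Probability.Probability"
begin

definition mean_one :: "nat pmf \<Rightarrow> bool" where
  "mean_one q \<longleftrightarrow> measure_pmf.expectation q real = 1"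

definition sum_le_prob :: "nat \<Rightarrow> (nat \<Rightarrow> nat pmf) \<Rightarrow> real" where
  "sum_le_prob n p =
     measure_pmf.prob (map_pmf (\<lambda>f. \<Sum>i<n. f i) (Pi_pmf {..<n} 0 p)) {..n}"

end

theory Submission
  imports Defs
begin

text \<open>Suppose \<open>p i\<close> puts mass \<open>a > 0\<close> on some \<open>j > n + 1\<close>. Move that mass down to \<open>n + 1\<close>
  and, to restore the mean, move a fraction \<open>r\<close> of the atom at \<open>0\<close> up to \<open>n + 1\<close>, where
  \<open>(n + 1) r P(X\<^sub>i = 0) = a (j - n - 1)\<close>; since \<open>E X\<^sub>i = 1\<close> forces \<open>P(X\<^sub>i = 0) \<ge> (j - 1) a\<close>,
  such an \<open>r \<le> 1\<close> exists. The first move happens entirely above \<open>n\<close> and does not affect the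
  event \<open>X\<^sub>1 + \<dots> + X\<^sub>n \<le> n\<close>; the second removes from it the event that \<open>X\<^sub>i\<close> was moved from
  \<open>0\<close> while the other variables sum to at most \<open>n\<close>. The latter has positive probability, since
  each mean-one law charges \<open>0\<close> or \<open>1\<close>, so the perturbed laws beat the minimiser.\<close>

definition move_mass :: "nat \<Rightarrow> nat \<Rightarrow> nat \<times> bool \<Rightarrow> nat" where
  "move_mass j m = (\<lambda>(y, b). if y = j \<or> y = 0 \<and> b then m else y)"

text \<open>The coin of bias \<open>r\<close> decides which part of the atom at \<open>0\<close> is moved to \<open>m\<close>.\<close>

definition move_mass_pmf :: "nat pmf \<Rightarrow> nat \<Rightarrow> nat \<Rightarrow> real \<Rightarrow> nat pmf" where
  "move_mass_pmf q j m r = map_pmf (move_mass j m) (pair_pmf q (bernoulli_pmf r))"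

lemma mean_one_integrable:
  assumes "mean_one q" shows "integrable (measure_pmf q) real"
  using assms unfolding mean_one_def by (metis not_integrable_integral_eq zero_neq_one)

lemma integrable_measure_pmf_indicator [simp]:
  "integrable (measure_pmf q) (indicator A :: _ \<Rightarrow> real)"
  by (intro measure_pmf.integrable_const_bound[where B=1]) (auto simp: indicator_def)

lemma prob_pmf_atLeast: "measure_pmf.prob q {k::nat..} = 1 - measure_pmf.prob q {..<k}"
proof -
  have "{k..} = space (measure_pmf q) - {..<k}" by auto
  then show ?thesis by (simp only: measure_pmf.prob_compl sets_measure_pmf UNIV_I)
qed

lemma mean_one_pmf_0_or_1_pos:
  assumes "mean_one q" shows "pmf q 0 + pmf q 1 > 0"
proof -
  have "measure_pmf.expectation q (\<lambda>y. 2 * indicator {y. 2 \<le> y} y) \<le> measure_pmf.expectation q real"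
    by (rule integral_mono[OF _ mean_one_integrable[OF assms]])
       (auto simp: indicator_def intro!: measure_pmf.integrable_const_bound[where B=2])
  then have "2 * measure_pmf.prob q {y. 2 \<le> y} \<le> 1"
    using assms by (simp add: mean_one_def)
  moreover have "measure_pmf.prob q {..<2} = pmf q 0 + pmf q 1"
    by (simp add: measure_measure_pmf_finite lessThan_Suc numeral_2_eq_2)
  ultimately show ?thesis using prob_pmf_atLeast[of q 2] by (simp add: atLeast_def)
qed

text \<open>Markov's inequality for \<open>X - 1\<close> on the event \<open>X \<ge> 1\<close>, refined by the atom at \<open>j\<close>.\<close>

lemma mean_one_pmf_0_ge:
  assumes "mean_one q" "1 \<le> j" shows "(real j - 1) * pmf q j \<le> pmf q 0"
proof -
  have "measure_pmf.expectation q (\<lambda>y. indicator {y. 1 \<le> y} y + (real j - 1) * indicator {j} y)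
      \<le> measure_pmf.expectation q real"
    by (rule integral_mono[OF _ mean_one_integrable[OF assms(1)]])
       (use assms(2) in \<open>auto simp: indicator_def
          intro!: measure_pmf.integrable_const_bound[where B="real j"]\<close>)
  then have "measure_pmf.prob q {y. 1 \<le> y} + (real j - 1) * pmf q j \<le> 1"
    using assms(1) by (simp add: mean_one_def measure_pmf_single)
  then show ?thesis
    using prob_pmf_atLeast[of q 1] by (simp add: atLeast_def lessThan_Suc measure_pmf_single)
qed

lemma expectation_move_mass_pmf:
  assumes "integrable (measure_pmf q) real" "j \<noteq> 0" "0 \<le> r" "r \<le> 1"
  shows "measure_pmf.expectation (move_mass_pmf q j m r) real
    = measure_pmf.expectation q real + (real m - real j) * pmf q j + real m * r * pmf q 0"
proof -
  let ?M = "pair_pmf q (bernoulli_pmf r)"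
  let ?moved_j = "{j} \<times> (UNIV :: bool set)" and ?moved_0 = "{0::nat} \<times> {True}"
  have move: "real (move_mass j m x)
      = real (fst x) + ((real m - real j) * indicator ?moved_j x + real m * indicator ?moved_0 x)"
    for x
    using assms(2) by (cases x) (auto simp: move_mass_def indicator_def)
  have fst_M: "map_pmf fst ?M = q" by (rule map_fst_pair_pmf)
  have "integrable ?M (\<lambda>x. real (fst x))"
    using assms(1) by (subst (asm) fst_M[symmetric]) simp
  then have "measure_pmf.expectation (move_mass_pmf q j m r) real
      = measure_pmf.expectation ?M (\<lambda>x. real (fst x))
        + ((real m - real j) * measure_pmf.prob ?M ?moved_j + real m * measure_pmf.prob ?M ?moved_0)"
    by (simp only: move_mass_pmf_def integral_map_pmf move) simp
  also have "measure_pmf.expectation ?M (\<lambda>x. real (fst x)) = measure_pmf.expectation q real"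
    by (subst fst_M[symmetric]) simp
  also have "measure_pmf.prob ?M ?moved_j = pmf q j"
    by (simp add: measure_pmf_prob_product measure_pmf_single)
  also have "measure_pmf.prob ?M ?moved_0 = pmf q 0 * r"
    using assms(3,4) by (simp add: measure_pmf_single pmf_pair)
  finally show ?thesis by (simp add: algebra_simps)
qed

lemma mean_one_move_mass_pmf:
  assumes "mean_one q" "1 \<le> m" "m < j" "pmf q j > 0"
  obtains r where "0 < r" "r \<le> 1" "0 < pmf q 0" "mean_one (move_mass_pmf q j m r)"
proof -
  define a where "a = pmf q j"
  define z where "z = pmf q 0"
  have a: "0 < a" using assms(4) by (simp add: a_def)
  have za: "(real j - 1) * a \<le> z"
    unfolding a_def z_def using assms(1,3) by (intro mean_one_pmf_0_ge) auto
  have "0 < (real j - 1) * a" using assms(2,3) a by simp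
  with za have z: "0 < z" by linarith
  define r where "r = a * (real j - real m) / (real m * z)"
  have mz: "0 < real m * z" using assms(2) z by simp
  have "0 < r" using assms(3) a mz by (simp add: r_def)
  moreover have "a * (real j - real m) \<le> real m * z"
  proof -
    have "a * (real j - real m) \<le> a * (real j - 1)"
      using assms(2) a by (intro mult_left_mono) auto
    also have "\<dots> \<le> z" using za by (simp add: mult.commute)
    also have "\<dots> \<le> real m * z" using assms(2) z by simp
    finally show ?thesis .
  qed
  then have "r \<le> 1" using mz by (simp add: r_def)
  moreover have "mean_one (move_mass_pmf q j m r)"
  proof -
    have "real m * r * z = (real m * z) * (a * (real j - real m)) / (real m * z)"
      by (simp add: r_def)
    then have "real m * r * z = a * (real j - real m)"
      using mz by (simp only: nonzero_mult_div_cancel_left less_irrefl)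
    moreover have "measure_pmf.expectation (move_mass_pmf q j m r) real
        = measure_pmf.expectation q real + (real m - real j) * a + real m * r * z"
      unfolding a_def z_def using assms(1,3) \<open>0 < r\<close> \<open>r \<le> 1\<close>
      by (intro expectation_move_mass_pmf mean_one_integrable) auto
    ultimately show ?thesis
      using assms(1) by (simp add: mean_one_def algebra_simps)
  qed
  ultimately show ?thesis using that z by (simp add: z_def)
qed

lemma prob_sum_le_move_mass_pmf:
  assumes "n < j" "n < m" "0 \<le> r" "r \<le> 1"
  shows "measure_pmf.prob (pair_pmf q R) {(y, t). y + t \<le> n}
    = measure_pmf.prob (pair_pmf (move_mass_pmf q j m r) R) {(y, t). y + t \<le> n}
      + pmf q 0 * r * measure_pmf.prob R {..n}"
proof -
  define \<Omega> where "\<Omega> = pair_pmf (pair_pmf q (bernoulli_pmf r)) R"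
  define E where "E = {(y, t). y + t \<le> (n::nat)}"
  define D where "D = ({0::nat} \<times> {True}) \<times> {..n}"
  have "pair_pmf q R = map_pmf (apfst fst) \<Omega>"
    by (simp add: \<Omega>_def map_fst_pair_pmf flip: pair_map_pmf1)
  moreover have "pair_pmf (move_mass_pmf q j m r) R = map_pmf (apfst (move_mass j m)) \<Omega>"
    by (simp add: move_mass_pmf_def move_mass_def \<Omega>_def pair_map_pmf1)
  moreover have "apfst fst -` E = apfst (move_mass j m) -` E \<union> D"
  proof (intro set_eqI)
    fix x :: "(nat \<times> bool) \<times> nat"
    obtain y b t where x: "x = ((y, b), t)" by (metis prod.collapse)
    show "x \<in> apfst fst -` E \<longleftrightarrow> x \<in> apfst (move_mass j m) -` E \<union> D"
      using assms(1,2) unfolding x by (cases b) (auto simp: E_def D_def move_mass_def)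
  qed
  moreover have "apfst (move_mass j m) -` E \<inter> D = {}"
    using assms(2) by (auto simp: E_def D_def move_mass_def)
  moreover have "measure_pmf.prob \<Omega> D = pmf q 0 * r * measure_pmf.prob R {..n}"
    using assms(3,4) by (simp add: \<Omega>_def D_def measure_pmf_prob_product measure_pmf_single pmf_pair)
  ultimately show ?thesis
    by (simp add: E_def measure_pmf.finite_measure_Union)
qed

lemma prob_sum_Pi_pmf_atMost_pos:
  assumes "finite A" "card A \<le> k" "\<And>i. i \<in> A \<Longrightarrow> 0 < pmf (p i) 0 + pmf (p i) 1"
  shows "0 < measure_pmf.prob (map_pmf (\<lambda>f. sum f A) (Pi_pmf A d p)) {..k}"
proof -
  define g where "g = (\<lambda>i. if i \<in> A then if 0 < pmf (p i) 0 then 0 else 1 else d)"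
  have "0 < pmf (p i) (g i)" if "i \<in> A" for i
    using assms(3)[OF that] that pmf_nonneg[of "p i" 0] by (auto simp: g_def)
  then have "0 < pmf (Pi_pmf A d p) g"
    using assms(1) by (simp add: pmf_Pi' g_def prod_pos)
  also have "\<dots> \<le> measure_pmf.prob (Pi_pmf A d p) ((\<lambda>f. sum f A) -` {..k})"
  proof -
    have "sum g A \<le> card A" using sum_bounded_above[of A g 1] by (simp add: g_def)
    then show ?thesis
      using assms(2) by (auto simp flip: measure_pmf_single intro!: measure_pmf.finite_measure_mono)
  qed
  finally show ?thesis by simp
qed

lemma sum_le_prob_eq_pair:
  assumes "i < n"
  shows "sum_le_prob n p = measure_pmf.prob
     (pair_pmf (p i) (map_pmf (\<lambda>f. sum f ({..<n} - {i})) (Pi_pmf ({..<n} - {i}) 0 p)))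
     {(y, t). y + t \<le> n}"
proof -
  define A where "A = {..<n} - {i}"
  have insert_A: "{..<n} = insert i A" using assms by (auto simp: A_def)
  have A: "finite A" "i \<notin> A" by (auto simp: A_def)
  have "sum_le_prob n p = measure_pmf.prob (map_pmf (\<lambda>f. \<Sum>k\<in>insert i A. f k)
      (map_pmf (\<lambda>(y, f). f(i := y)) (pair_pmf (p i) (Pi_pmf A 0 p)))) {..n}"
    unfolding sum_le_prob_def insert_A by (subst Pi_pmf_insert[OF A]) simp
  also have "\<dots> = measure_pmf.prob (pair_pmf (p i) (Pi_pmf A 0 p))
      (apsnd (\<lambda>f. sum f A) -` {(y, t). y + t \<le> n})"
  proof -
    have "(\<Sum>k\<in>A. (f(i := y)) k) = sum f A" for f :: "nat \<Rightarrow> nat" and y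
      using A(2) by (intro sum.cong) auto
    then have "(\<lambda>x. \<Sum>k\<in>insert i A. (case x of (y, f) \<Rightarrow> f(i := y)) k) -` {..n}
        = apsnd (\<lambda>f. sum f A) -` {(y, t). y + t \<le> n}"
      using A by auto
    then show ?thesis by (simp add: map_pmf_comp)
  qed
  finally show ?thesis by (simp add: A_def pair_map_pmf2)
qed

theorem lemma1:
  fixes n :: nat and p :: "nat \<Rightarrow> nat pmf"
  assumes "n \<ge> 2"
    and "\<forall>i<n. mean_one (p i)"
    and "\<forall>q :: nat \<Rightarrow> nat pmf. (\<forall>i<n. mean_one (q i)) \<longrightarrow> sum_le_prob n p \<le> sum_le_prob n q"
  shows "\<forall>i<n. \<forall>j>n+1. pmf (p i) j = 0"
proof (intro allI impI, rule ccontr)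
  fix i j assume i: "i < n" and j: "n + 1 < j" and "pmf (p i) j \<noteq> 0"
  then have "0 < pmf (p i) j" using pmf_nonneg[of "p i" j] by linarith
  then obtain r where r: "0 < r" "r \<le> 1" "0 < pmf (p i) 0"
    and mean: "mean_one (move_mass_pmf (p i) j (n + 1) r)"
    using mean_one_move_mass_pmf[of "p i" "n + 1" j] assms(2) i j by auto
  define q where "q = p(i := move_mass_pmf (p i) j (n + 1) r)"
  define A where "A = {..<n} - {i}"
  define R where "R = map_pmf (\<lambda>f. sum f A) (Pi_pmf A 0 p)"
  have "map_pmf (\<lambda>f. sum f A) (Pi_pmf A 0 q) = R"
    unfolding R_def q_def A_def by (intro arg_cong2[where f=map_pmf] refl Pi_pmf_cong) auto
  then have "sum_le_prob n p = sum_le_prob n q + pmf (p i) 0 * r * measure_pmf.prob R {..n}"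
    using sum_le_prob_eq_pair[OF i, of p] sum_le_prob_eq_pair[OF i, of q] j r
      prob_sum_le_move_mass_pmf[of n j "n + 1" r "p i" R]
    by (simp add: A_def R_def q_def)
  moreover have "0 < measure_pmf.prob R {..n}"
    unfolding R_def using assms(2) i
    by (intro prob_sum_Pi_pmf_atMost_pos mean_one_pmf_0_or_1_pos) (auto simp: A_def)
  then have "0 < pmf (p i) 0 * r * measure_pmf.prob R {..n}" using r by simp
  moreover have "sum_le_prob n p \<le> sum_le_prob n q"
    using assms(2,3) mean by (simp add: q_def)
  ultimately show False by linarith
qed

end
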